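(* Let $m,a,b,t\in\mathbb{N}$ with $m\geq 3$, $a\geq 1$, $t\in\{2,\ldots,m-1\}$ and $(t-1)(am+1)<bm+t<t(am+1)$, and let $S=\langle m,\ am+1,\ bm+t\rangle$. If $\mathrm{Ap}(S,m)=\{w(0),w(1),\ldots,w(m-1)\}$, where $w(i)$ is the least element of $S$ congruent to $i$ modulo $m$, then \[ w(i)=\Big\lfloor \frac{i}{t}\Big\rfloor (bm+t)+(i\bmod t)(am+1)\quad\text{for all } i\in\{0,1,\ldots,m-1\}. \]
   Context: $\mathbb{N}=\{0,1,2,\ldots\}$. $\langle A\rangle$ denotes the submonoid of $(\mathbb{N},+)$ generated by $A$ (here $S$ is a numerical semigroup, i.e. has finite complement in $\mathbb{N}$). For $n\in S\setminus\{0\}$, $\mathrm{Ap}(S,n)=\{s\in S: s-n\notin S\}$. $\lfloor x\rfloor$ is the floor and $a\bmod b$ the remainder of the division of $a$ by $b$. *)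

theory Defs
  imports Main
begin

inductive_set gen_monoid :: "nat set \<Rightarrow> nat set" for A :: "nat set" where
  zero: "0 \<in> gen_monoid A"
| add: "x \<in> A \<Longrightarrow> y \<in> gen_monoid A \<Longrightarrow> x + y \<in> gen_monoid A"

definition apery :: "nat set \<Rightarrow> nat \<Rightarrow> nat set" where
  "apery S n = {s \<in> S. s < n \<or> s - n \<notin> S}"

definition apw :: "nat set \<Rightarrow> nat \<Rightarrow> nat \<Rightarrow> nat" where
  "apw S m i = (LEAST s. s \<in> S \<and> s mod m = i mod m)"

end

theory Submission
  imports Defs
begin

text \<open>Every element of \<open>S = \<langle>m, A, B\<rangle>\<close> with \<open>A = am + 1\<close> and \<open>B = bm + t\<close> has the form
  \<open>xm + yA + zB\<close> and is congruent to \<open>n = y + zt\<close> modulo \<open>m\<close>. Writing \<open>n = qt + r\<close> with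
  \<open>r < t\<close>, trading \<open>t\<close> copies of \<open>A\<close> for one \<open>B\<close> never costs more because \<open>B \<le> tA\<close>, so
  \<open>yA + zB \<ge> qB + rA\<close>; and \<open>qB + rA\<close> is monotone in \<open>n\<close> because \<open>(t - 1)A \<le> B\<close>. Since an
  element congruent to \<open>i < m\<close> has \<open>n \<ge> i\<close>, it is at least \<open>(i div t)B + (i mod t)A\<close>, which
  itself lies in \<open>S\<close> and is congruent to \<open>i\<close>.\<close>

lemma gen_monoid_add:
  assumes "u \<in> gen_monoid G" "v \<in> gen_monoid G"
  shows "u + v \<in> gen_monoid G"
  using assms
proof (induction rule: gen_monoid.induct)
  case zero
  then show ?case by simp
next
  case (add x y)
  then show ?case using gen_monoid.add[of x G "y + v"] by (simp add: add.assoc)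
qed

lemma gen_monoid_mult:
  assumes "g \<in> G"
  shows "k * g \<in> gen_monoid G"
proof (induction k)
  case 0
  then show ?case by (simp add: gen_monoid.zero)
next
  case (Suc k)
  then show ?case using gen_monoid.add[OF assms] by simp
qed

lemma gen_monoid_three:
  "gen_monoid {p, q, r} = {x * p + y * q + z * r | x y z. True}"
proof
  show "gen_monoid {p, q, r} \<subseteq> {x * p + y * q + z * r | x y z. True}"
  proof
    fix s assume "s \<in> gen_monoid {p, q, r}"
    then show "s \<in> {x * p + y * q + z * r | x y z. True}"
    proof (induction rule: gen_monoid.induct)
      case zero
      then show ?case by force
    next
      case (add u v)
      then obtain x y z where v: "v = x * p + y * q + z * r" by blast
      from add.hyps(1) consider "u = p" | "u = q" | "u = r" by blast
      then show ?case
      proof cases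
        case 1
        then have "u + v = Suc x * p + y * q + z * r" using v by simp
        then show ?thesis by blast
      next
        case 2
        then have "u + v = x * p + Suc y * q + z * r" using v by simp
        then show ?thesis by blast
      next
        case 3
        then have "u + v = x * p + y * q + Suc z * r" using v by simp
        then show ?thesis by blast
      qed
    qed
  qed
  show "{x * p + y * q + z * r | x y z. True} \<subseteq> gen_monoid {p, q, r}"
    by (auto intro!: gen_monoid_add gen_monoid_mult)
qed

definition greedy_cost :: "nat \<Rightarrow> nat \<Rightarrow> nat \<Rightarrow> nat \<Rightarrow> nat" where
  "greedy_cost t A B n = (n div t) * B + (n mod t) * A"

lemma mono_greedy_cost:
  assumes "(t - 1) * A \<le> B"
  shows "mono (greedy_cost t A B)"
proof (rule mono_iff_le_Suc[THEN iffD2], intro allI)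
  fix n
  show "greedy_cost t A B n \<le> greedy_cost t A B (Suc n)"
  proof (cases "Suc (n mod t) = t")
    case True
    then have "Suc n div t = Suc (n div t)" "Suc n mod t = 0"
      by (auto simp: div_Suc mod_Suc)
    moreover have "n mod t = t - 1" using True by simp
    ultimately show ?thesis using assms by (simp add: greedy_cost_def)
  next
    case False
    then have "Suc n div t = n div t" "Suc n mod t = Suc (n mod t)"
      by (auto simp: div_Suc mod_Suc)
    then show ?thesis by (simp add: greedy_cost_def)
  qed
qed

lemma greedy_cost_le:
  assumes "B \<le> t * A"
  shows "greedy_cost t A B (y + z * t) \<le> y * A + z * B"
proof -
  have "y + z * t = y mod t + (y div t + z) * t"
    by (simp add: algebra_simps)
  then have "greedy_cost t A B (y + z * t) \<le> (y div t + z) * B + (y mod t) * A"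
    unfolding greedy_cost_def by (cases "t = 0") simp_all
  also have "\<dots> \<le> (y div t) * t * A + (y mod t) * A + z * B"
    using mult_le_mono2[OF assms, of "y div t"] by (simp add: algebra_simps)
  also have "\<dots> = y * A + z * B"
    by (metis add_mult_distrib div_mult_mod_eq)
  finally show ?thesis .
qed

lemma apw_gen_monoid_three:
  fixes m A B t i :: nat
  assumes "A mod m = 1 mod m" and "B mod m = t mod m"
    and "(t - 1) * A \<le> B" and "B \<le> t * A" and "i < m"
  shows "apw (gen_monoid {m, A, B}) m i = greedy_cost t A B i"
proof -
  let ?S = "gen_monoid {m, A, B}"
  have residue: "(x * m + y * A + z * B) mod m = (y + z * t) mod m" for x y z
    using assms(1,2) by (metis mod_add_cong mod_mult_cong mod_mult_self4 mult.commute mult.right_neutral)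
  have "greedy_cost t A B i = 0 * m + (i mod t) * A + (i div t) * B"
    by (simp add: greedy_cost_def)
  then have member: "greedy_cost t A B i \<in> ?S"
    unfolding gen_monoid_three by blast
  have congruent: "greedy_cost t A B i mod m = i mod m"
    using residue[of 0 "i mod t" "i div t"] by (simp add: greedy_cost_def add.commute mult.commute)
  have least: "greedy_cost t A B i \<le> s" if "s \<in> ?S" and "s mod m = i mod m" for s
  proof -
    obtain x y z where s: "s = x * m + y * A + z * B"
      using \<open>s \<in> ?S\<close> unfolding gen_monoid_three by blast
    have "(y + z * t) mod m = i"
      using that(2) residue s assms(5) by simp
    then have "i \<le> y + z * t"
      by (metis mod_less_eq_dividend)
    then have "greedy_cost t A B i \<le> greedy_cost t A B (y + z * t)"
      by (rule monoD[OF mono_greedy_cost[OF assms(3)]])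
    also have "\<dots> \<le> y * A + z * B"
      using greedy_cost_le[OF assms(4)] .
    finally show ?thesis using s by simp
  qed
  show ?thesis
    unfolding apw_def by (rule Least_equality) (use member congruent least in auto)
qed

theorem proposition3p6:
  fixes m a b t :: nat and S :: "nat set"
  assumes "m \<ge> 3" and "a \<ge> 1" and "2 \<le> t" and "t \<le> m - 1"
    and "(t - 1) * (a * m + 1) < b * m + t" and "b * m + t < t * (a * m + 1)"
    and "S = gen_monoid {m, a * m + 1, b * m + t}"
    and "apery S m = apw S m ` {0..<m}"
  shows "\<forall>i \<in> {0..<m}. apw S m i = (i div t) * (b * m + t) + (i mod t) * (a * m + 1)"
proof
  fix i assume "i \<in> {0..<m}"
  have "(a * m + 1) mod m = 1 mod m" "(b * m + t) mod m = t mod m"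
    by (simp_all only: mod_mult_self3)
  then have "apw S m i = greedy_cost t (a * m + 1) (b * m + t) i"
    unfolding assms(7) using assms(5,6) \<open>i \<in> {0..<m}\<close>
    by (intro apw_gen_monoid_three) simp_all
  then show "apw S m i = (i div t) * (b * m + t) + (i mod t) * (a * m + 1)"
    by (simp add: greedy_cost_def)
qed

end
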